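(* Let $d\ge1$, $T\ge2$, $p\ge2$. Let $\{X_j\}_{j\ge1}\subset\mathbb R^d$ be a martingale difference sequence with respect to $\{\mathcal F_j\}_{j\ge0}$ with finite conditional covariances $V_j=\mathsf E[X_jX_j^\top\mid\mathcal F_{j-1}]$ and $\sup_j\|X_j\|_\infty\le\varkappa$ a.s. for some $\varkappa>0$. Let $\{B_j\}$ be deterministic $d\times d$ matrices with $\sup_j\|B_j\|_\infty\le B$. Set $Y_T=\sum_{j=1}^TB_jX_j$ and $W_T=\operatorname{diag}\big(\sum_{j=1}^TB_jV_jB_j^\top\big)$ (the diagonal matrix with the same diagonal). Then $$\big(\mathsf E\|Y_T\|_\infty^p\big)^{1/p}\le 4p\log(2dT^2)\Big(\big(\mathsf E\|W_T\|_\infty^{p/2}\big)^{1/p}+B\varkappa\Big).$$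
   Context: For a vector, $\|\cdot\|_\infty$ is the max-norm; for a matrix it is the induced $\ell_\infty$ operator norm (maximum absolute row sum). A martingale difference sequence means $X_j$ is $\mathcal F_j$-measurable, integrable, and $\mathsf E[X_j\mid\mathcal F_{j-1}]=0$. *)

theory Defs
  imports "HOL-Probability.Probability"
begin

definition vnorm_inf :: "real ^ 'd \<Rightarrow> real" where
  "vnorm_inf v = Max (range (\<lambda>i. \<bar>v $ i\<bar>))"

definition mnorm_inf :: "real ^ 'd ^ 'd \<Rightarrow> real" where
  "mnorm_inf A = Max (range (\<lambda>i. \<Sum>k\<in>UNIV. \<bar>A $ i $ k\<bar>))"

definition diag_part :: "real ^ 'd ^ 'd \<Rightarrow> real ^ 'd ^ 'd" where
  "diag_part A = (\<chi> i k. if i = k then A $ i $ k else 0)"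

definition filtration :: "'a measure \<Rightarrow> (nat \<Rightarrow> 'a measure) \<Rightarrow> bool" where
  "filtration M F \<longleftrightarrow> (\<forall>n. subalgebra M (F n)) \<and> (\<forall>n. sets (F n) \<subseteq> sets (F (Suc n)))"

definition mds :: "'a measure \<Rightarrow> (nat \<Rightarrow> 'a measure) \<Rightarrow> (nat \<Rightarrow> 'a \<Rightarrow> real ^ 'd) \<Rightarrow> bool" where
  "mds M F X \<longleftrightarrow> (\<forall>j\<ge>1. X j \<in> borel_measurable (F j) \<and> integrable M (X j) \<and>
      (\<forall>i. AE x in M. real_cond_exp M (F (j - 1)) (\<lambda>y. X j y $ i) x = 0))"

definition cond_cov :: "'a measure \<Rightarrow> (nat \<Rightarrow> 'a measure) \<Rightarrow> (nat \<Rightarrow> 'a \<Rightarrow> real ^ 'd) \<Rightarrow> nat \<Rightarrow> 'a \<Rightarrow> real ^ 'd ^ 'd" where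
  "cond_cov M F X j x = (\<chi> i k. real_cond_exp M (F (j - 1)) (\<lambda>y. X j y $ i * X j y $ k) x)"

end

theory Submission
  imports Defs
begin

text \<open>
  Write \<open>S\<^sub>i = \<Sum>\<^sub>j (B\<^sub>j X\<^sub>j)\<^sub>i\<close> and \<open>A\<^sub>i = \<Sum>\<^sub>j (B\<^sub>j V\<^sub>j B\<^sub>j\<^sup>T)\<^sub>i\<^sub>i\<close>, and \<open>a = B\<kappa>\<close>. For every coordinate \<open>i\<close>, sign \<open>\<sigma>\<close> and
  \<open>0 \<le> \<lambda> \<le> 1/a\<close>, the process \<open>exp (\<lambda>\<sigma>S\<^sub>i - \<lambda>\<^sup>2A\<^sub>i)\<close> is a supermartingale, because
  \<open>exp x \<le> 1 + x + x\<^sup>2\<close> for \<open>|x| \<le> 1\<close>; so its expectation is at most 1. Summing over the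
  \<open>2d\<close> coordinates and signs and the \<open>T\<close> dyadic scales \<open>\<lambda>\<^sub>k = 1/(a2\<^sup>k)\<close> gives a variable
  \<open>G\<close> with \<open>E G \<le> 2dT\<close>. Choosing for each outcome the scale adapted to \<open>\<surd>W\<close>, where
  \<open>W = max\<^sub>i A\<^sub>i\<close>, gives \<open>|S\<^sub>i| \<le> (\<surd>W + a)(1 + 2 ln G\<^sub>0)\<close> on the event \<open>G \<le> G\<^sub>0\<close>.
  On the complementary event, the trivial bound \<open>|S\<^sub>i| \<le> Ta\<close> and Markov's inequality for
  \<open>G\<close> contribute at most \<open>a\<^sup>p\<close> once \<open>G\<^sub>0 = 2dT\<sdot>T\<^sup>p\<close>.
\<close>

lemma exp_le_one_plus_x_plus_sq:
  fixes x :: real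
  assumes "\<bar>x\<bar> \<le> 1"
  shows "exp x \<le> 1 + x + x\<^sup>2"
proof (cases "0 \<le> x")
  case True
  then show ?thesis using assms exp_bound by simp
next
  case False
  define y where "y = -x"
  have y: "0 < y" using False by (simp add: y_def)
  have "0 \<le> (y - 1/2)\<^sup>2" by simp
  then have pos: "0 < 1 - y + y\<^sup>2" by (simp add: power2_eq_square algebra_simps)
  have "(1 + y + y\<^sup>2 / 2) * (1 - y + y\<^sup>2) = 1 + (y\<^sup>2 + y ^ 3 + y ^ 4) / 2"
    by (simp add: field_simps power2_eq_square power3_eq_cube power4_eq_xxxx)
  then have "1 \<le> (1 + y + y\<^sup>2 / 2) * (1 - y + y\<^sup>2)"
    using y by simp
  also have "\<dots> \<le> exp y * (1 - y + y\<^sup>2)"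
    using y pos by (intro mult_right_mono exp_lower_Taylor_quadratic) auto
  finally have "exp (- y) \<le> 1 - y + y\<^sup>2" by (simp add: exp_minus field_simps)
  then show ?thesis by (simp add: y_def)
qed

lemma filtration_subalgebra: "filtration M F \<Longrightarrow> subalgebra M (F n)"
  unfolding filtration_def by blast

lemma measurable_filtration_mono:
  assumes "filtration M F" "m \<le> n" "f \<in> borel_measurable (F m)"
  shows "f \<in> borel_measurable (F n)"
proof -
  have "sets (F m) \<subseteq> sets (F n)"
    using assms(1,2) lift_Suc_mono_le[of "\<lambda>k. sets (F k)"] unfolding filtration_def by blast
  moreover have "space (F m) = space (F n)"
    using filtration_subalgebra[OF assms(1)] unfolding subalgebra_def by metis
  ultimately have "subalgebra (F n) (F m)" unfolding subalgebra_def by simp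
  then show ?thesis using measurable_from_subalg assms(3) by blast
qed

lemma measurable_filtration:
  "filtration M F \<Longrightarrow> f \<in> borel_measurable (F n) \<Longrightarrow> f \<in> borel_measurable M"
  using measurable_from_subalg filtration_subalgebra by blast

lemma sigma_finite_subalgebra_filtration:
  assumes "prob_space M" "filtration M F"
  shows "sigma_finite_subalgebra M (F n)"
  using assms filtration_subalgebra[OF assms(2)]
  by (intro finite_measure_subalgebra_is_sigma_finite)
    (simp add: finite_measure_subalgebra_def finite_measure_subalgebra_axioms_def prob_space_def)

lemma abs_le_imp_square_le: "\<bar>x\<bar> \<le> a \<Longrightarrow> x\<^sup>2 \<le> (a::real)\<^sup>2"
  by (meson abs_ge_zero order_trans power2_le_iff_abs_le)

lemma integrable_bounded_square:
  fixes f :: "'a \<Rightarrow> real"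
  assumes "finite_measure M" "f \<in> borel_measurable M" "AE x in M. \<bar>f x\<bar> \<le> a"
  shows "integrable M f" "integrable M (\<lambda>x. (f x)\<^sup>2)"
proof -
  interpret finite_measure M by fact
  show "integrable M f" using assms(2,3) by (intro integrable_const_bound[where B=a]) auto
  have "AE x in M. norm ((f x)\<^sup>2) \<le> a\<^sup>2"
    using assms(3) by eventually_elim (simp add: abs_le_imp_square_le)
  then show "integrable M (\<lambda>x. (f x)\<^sup>2)" using assms(2) by (intro integrable_const_bound) auto
qed

definition bounded_mds_cond_var ::
    "'a measure \<Rightarrow> (nat \<Rightarrow> 'a measure) \<Rightarrow> real \<Rightarrow> (nat \<Rightarrow> 'a \<Rightarrow> real) \<Rightarrow> (nat \<Rightarrow> 'a \<Rightarrow> real) \<Rightarrow> bool"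
  where "bounded_mds_cond_var M F a D v \<longleftrightarrow> (\<forall>j\<ge>1.
    D j \<in> borel_measurable (F j) \<and> (AE x in M. \<bar>D j x\<bar> \<le> a) \<and>
    (AE x in M. real_cond_exp M (F (j - 1)) (D j) x = 0) \<and>
    v j \<in> borel_measurable (F (j - 1)) \<and>
    (AE x in M. v j x = real_cond_exp M (F (j - 1)) (\<lambda>y. (D j y)\<^sup>2) x))"

lemma bounded_mds_cond_varI:
  assumes "\<And>j. 1 \<le> j \<Longrightarrow> D j \<in> borel_measurable (F j)"
    and "\<And>j. 1 \<le> j \<Longrightarrow> AE x in M. \<bar>D j x\<bar> \<le> a"
    and "\<And>j. 1 \<le> j \<Longrightarrow> AE x in M. real_cond_exp M (F (j - 1)) (D j) x = 0"
    and "\<And>j. 1 \<le> j \<Longrightarrow> v j \<in> borel_measurable (F (j - 1))"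
    and "\<And>j. 1 \<le> j \<Longrightarrow> AE x in M. v j x = real_cond_exp M (F (j - 1)) (\<lambda>y. (D j y)\<^sup>2) x"
  shows "bounded_mds_cond_var M F a D v"
  using assms unfolding bounded_mds_cond_var_def by blast

lemma bounded_mds_cond_varD:
  assumes "bounded_mds_cond_var M F a D v" "1 \<le> j"
  shows "D j \<in> borel_measurable (F j)"
    and "AE x in M. \<bar>D j x\<bar> \<le> a"
    and "AE x in M. real_cond_exp M (F (j - 1)) (D j) x = 0"
    and "v j \<in> borel_measurable (F (j - 1))"
    and "AE x in M. v j x = real_cond_exp M (F (j - 1)) (\<lambda>y. (D j y)\<^sup>2) x"
  using assms unfolding bounded_mds_cond_var_def by blast+

lemma bounded_mds_cond_var_bounds:
  assumes "prob_space M" "filtration M F" "bounded_mds_cond_var M F a D v" "1 \<le> j"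
  shows "AE x in M. 0 \<le> v j x \<and> v j x \<le> a\<^sup>2"
proof -
  interpret prob_space M by fact
  interpret S: sigma_finite_subalgebra M "F (j - 1)"
    using sigma_finite_subalgebra_filtration assms(1,2) .
  note D = bounded_mds_cond_varD[OF assms(3,4)]
  have D_M: "D j \<in> borel_measurable M" using measurable_filtration[OF assms(2) D(1)] .
  have "AE x in M. (D j x)\<^sup>2 \<le> a\<^sup>2"
    using D(2) by eventually_elim (rule abs_le_imp_square_le)
  then have "AE x in M. real_cond_exp M (F (j - 1)) (\<lambda>y. (D j y)\<^sup>2) x \<le> a\<^sup>2"
    using integrable_bounded_square(2)[OF _ D_M D(2)] by (intro S.real_cond_exp_le_c) auto
  moreover have "AE x in M. 0 \<le> real_cond_exp M (F (j - 1)) (\<lambda>y. (D j y)\<^sup>2) x"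
    using D_M by (intro S.real_cond_exp_pos) auto
  ultimately show ?thesis using D(5) by eventually_elim simp
qed

lemma bounded_mds_cond_var_sign:
  assumes "prob_space M" "filtration M F" "bounded_mds_cond_var M F a D v" "\<bar>\<sigma>\<bar> = 1"
  shows "bounded_mds_cond_var M F a (\<lambda>j x. \<sigma> * D j x) v"
proof (rule bounded_mds_cond_varI)
  fix j :: nat assume j: "1 \<le> j"
  interpret prob_space M by fact
  interpret S: sigma_finite_subalgebra M "F (j - 1)"
    using sigma_finite_subalgebra_filtration assms(1,2) .
  note D = bounded_mds_cond_varD[OF assms(3) j]
  have int: "integrable M (D j)"
    using integrable_bounded_square(1)[OF _ measurable_filtration[OF assms(2) D(1)] D(2)] by simp
  show "(\<lambda>x. \<sigma> * D j x) \<in> borel_measurable (F j)" using D(1) by simp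
  show "AE x in M. \<bar>\<sigma> * D j x\<bar> \<le> a" using D(2) by eventually_elim (simp add: abs_mult assms(4))
  show "AE x in M. real_cond_exp M (F (j - 1)) (\<lambda>x. \<sigma> * D j x) x = 0"
    using S.real_cond_exp_cmult[OF int, of \<sigma>] D(3) by eventually_elim simp
  have "\<sigma>\<^sup>2 = 1" using assms(4) power2_abs[of \<sigma>] by simp
  then have "(\<sigma> * D j x)\<^sup>2 = (D j x)\<^sup>2" for x by (simp add: power_mult_distrib)
  then show "AE x in M. v j x = real_cond_exp M (F (j - 1)) (\<lambda>y. (\<sigma> * D j y)\<^sup>2) x"
    using D(5) by simp
qed (use bounded_mds_cond_varD[OF assms(3)] in simp)

lemma (in sigma_finite_subalgebra) real_cond_exp_exp_le_exp_cond_var: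
  assumes "prob_space M" and D: "D \<in> borel_measurable M" "AE x in M. \<bar>D x\<bar> \<le> a"
    "AE x in M. real_cond_exp M F D x = 0"
    and l: "0 \<le> l" "l * a \<le> 1"
  shows "AE x in M. real_cond_exp M F (\<lambda>x. exp (l * D x)) x
           \<le> exp (l\<^sup>2 * real_cond_exp M F (\<lambda>x. (D x)\<^sup>2) x)"
proof -
  interpret prob_space M by fact
  have int_D: "integrable M D" and int_D2: "integrable M (\<lambda>x. (D x)\<^sup>2)"
    using integrable_bounded_square[OF _ D(1,2)] by (simp_all add: finite_measure_axioms)
  have "AE x in M. norm (exp (l * D x)) \<le> exp (l * a)"
    using D(2) by eventually_elim (use l in \<open>auto intro: mult_left_mono abs_le_D1\<close>)
  then have int_exp: "integrable M (\<lambda>x. exp (l * D x))"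
    using D(1) by (intro integrable_const_bound) auto
  define q where "q x = 1 + l * D x + l\<^sup>2 * (D x)\<^sup>2" for x
  have int_q: "integrable M q" unfolding q_def using int_D int_D2 by auto
  have "AE x in M. exp (l * D x) \<le> q x"
    using D(2)
  proof eventually_elim
    case (elim x)
    have "\<bar>l * D x\<bar> \<le> l * a" using elim l by (simp add: abs_mult mult_left_mono)
    then show ?case unfolding q_def
      using exp_le_one_plus_x_plus_sq[of "l * D x"] l by (simp add: power_mult_distrib)
  qed
  then have mono: "AE x in M. real_cond_exp M F (\<lambda>x. exp (l * D x)) x \<le> real_cond_exp M F q x"
    by (rule real_cond_exp_mono[OF _ int_exp int_q])
  have "AE x in M. real_cond_exp M F q x
      = real_cond_exp M F (\<lambda>x. 1 + l * D x) x + real_cond_exp M F (\<lambda>x. l\<^sup>2 * (D x)\<^sup>2) x"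
    unfolding q_def using int_D int_D2 by (intro real_cond_exp_add) auto
  moreover have "AE x in M. real_cond_exp M F (\<lambda>x. 1 + l * D x) x
      = real_cond_exp M F (\<lambda>x. 1) x + real_cond_exp M F (\<lambda>x. l * D x) x"
    using int_D by (intro real_cond_exp_add) auto
  moreover have "AE x in M. real_cond_exp M F (\<lambda>x. 1) x = 1"
    by (intro real_cond_exp_F_meas) auto
  moreover have "AE x in M. real_cond_exp M F (\<lambda>x. l * D x) x = l * real_cond_exp M F D x"
    using int_D by (rule real_cond_exp_cmult)
  moreover have "AE x in M. real_cond_exp M F (\<lambda>x. l\<^sup>2 * (D x)\<^sup>2) x
      = l\<^sup>2 * real_cond_exp M F (\<lambda>x. (D x)\<^sup>2) x"
    using int_D2 by (rule real_cond_exp_cmult)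
  ultimately show ?thesis
    using mono D(3)
  proof eventually_elim
    case (elim x)
    then have "real_cond_exp M F (\<lambda>x. exp (l * D x)) x \<le> 1 + l\<^sup>2 * real_cond_exp M F (\<lambda>x. (D x)\<^sup>2) x"
      by simp
    also have "\<dots> \<le> exp (l\<^sup>2 * real_cond_exp M F (\<lambda>x. (D x)\<^sup>2) x)"
      by (rule exp_ge_add_one_self)
    finally show ?case .
  qed
qed

definition exp_supermartingale ::
    "real \<Rightarrow> (nat \<Rightarrow> 'a \<Rightarrow> real) \<Rightarrow> (nat \<Rightarrow> 'a \<Rightarrow> real) \<Rightarrow> nat \<Rightarrow> 'a \<Rightarrow> real"
  where "exp_supermartingale l D v n x = exp (l * (\<Sum>j=1..n. D j x) - l\<^sup>2 * (\<Sum>j=1..n. v j x))"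

lemma exp_supermartingale_Suc:
  "exp_supermartingale l D v (Suc n) x
    = exp_supermartingale l D v n x * exp (- (l\<^sup>2 * v (Suc n) x)) * exp (l * D (Suc n) x)"
  unfolding exp_supermartingale_def by (simp add: algebra_simps flip: exp_add)

lemma exp_supermartingale_measurable:
  assumes filt: "filtration M F" and mds: "bounded_mds_cond_var M F a D v"
  shows "exp_supermartingale l D v n \<in> borel_measurable (F n)"
proof -
  note D = bounded_mds_cond_varD[OF mds]
  have "(\<lambda>x. \<Sum>j=1..n. D j x) \<in> borel_measurable (F n)"
    by (intro borel_measurable_sum) (auto intro: measurable_filtration_mono[OF filt _ D(1)])
  moreover have "(\<lambda>x. \<Sum>j=1..n. v j x) \<in> borel_measurable (F n)"
    by (intro borel_measurable_sum) (auto intro: measurable_filtration_mono[OF filt _ D(4)])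
  ultimately show ?thesis unfolding exp_supermartingale_def[abs_def] by measurable
qed

lemma integrable_exp_supermartingale:
  assumes P: "prob_space M" and filt: "filtration M F"
    and mds: "bounded_mds_cond_var M F a D v" and l: "0 \<le> l"
  shows "integrable M (exp_supermartingale l D v n)"
proof -
  interpret prob_space M by fact
  have "AE x in M. \<forall>j\<in>{1..n}. \<bar>D j x\<bar> \<le> a \<and> 0 \<le> v j x"
    using bounded_mds_cond_var_bounds[OF P filt mds]
    by (intro AE_finite_allI AE_conjI bounded_mds_cond_varD(2)[OF mds]) auto
  then have "AE x in M. norm (exp_supermartingale l D v n x) \<le> exp (l * (n * a))"
  proof eventually_elim
    case (elim x)
    have "(\<Sum>j=1..n. D j x) \<le> n * a"
      using sum_mono[of "{1..n}" "\<lambda>j. D j x" "\<lambda>_. a"] elim by (simp add: abs_le_iff)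
    then have "l * (\<Sum>j=1..n. D j x) \<le> l * (n * a)" using l by (rule mult_left_mono)
    moreover have "0 \<le> l\<^sup>2 * (\<Sum>j=1..n. v j x)"
      using elim by (intro mult_nonneg_nonneg sum_nonneg) auto
    ultimately show ?case by (simp add: exp_supermartingale_def)
  qed
  then show ?thesis
    using measurable_filtration[OF filt exp_supermartingale_measurable[OF filt mds]]
    by (intro integrable_const_bound)
qed

lemma integral_exp_supermartingale_Suc_le:
  assumes P: "prob_space M" and filt: "filtration M F"
    and mds: "bounded_mds_cond_var M F a D v" and l: "0 \<le> l" "l * a \<le> 1"
  shows "(\<integral>x. exp_supermartingale l D v (Suc n) x \<partial>M) \<le> (\<integral>x. exp_supermartingale l D v n x \<partial>M)"
proof -
  interpret prob_space M by fact
  interpret S: sigma_finite_subalgebra M "F n"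
    using sigma_finite_subalgebra_filtration P filt .
  note D = bounded_mds_cond_varD[OF mds, of "Suc n", simplified]
  let ?Z = "exp_supermartingale l D v"
  define g where "g x = ?Z n x * exp (- (l\<^sup>2 * v (Suc n) x))" for x
  define h where "h x = exp (l * D (Suc n) x)" for x
  have g_meas: "g \<in> borel_measurable (F n)"
    unfolding g_def using exp_supermartingale_measurable[OF filt mds] D(4) by simp
  have D_meas: "D (Suc n) \<in> borel_measurable M" using measurable_filtration[OF filt D(1)] .
  then have h_meas: "h \<in> borel_measurable M" unfolding h_def by simp
  have "integrable M (\<lambda>x. g x * h x)"
    using integrable_exp_supermartingale[OF P filt mds l(1), of "Suc n"]
    by (simp add: g_def h_def exp_supermartingale_Suc[abs_def])
  note tower = S.real_cond_exp_intg[OF this g_meas h_meas]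
  have "AE x in M. real_cond_exp M (F n) h x \<le> exp (l\<^sup>2 * v (Suc n) x)"
    using S.real_cond_exp_exp_le_exp_cond_var[OF P D_meas D(2,3) l] D(5)
    unfolding h_def by eventually_elim simp
  then have "AE x in M. g x * real_cond_exp M (F n) h x \<le> ?Z n x"
  proof eventually_elim
    case (elim x)
    then have "g x * real_cond_exp M (F n) h x \<le> g x * exp (l\<^sup>2 * v (Suc n) x)"
      by (intro mult_left_mono) (simp_all add: g_def exp_supermartingale_def)
    then show ?case by (simp add: g_def mult.assoc flip: exp_add)
  qed
  then have "(\<integral>x. g x * real_cond_exp M (F n) h x \<partial>M) \<le> (\<integral>x. ?Z n x \<partial>M)"
    using integral_mono_AE[OF tower(1) integrable_exp_supermartingale[OF P filt mds l(1)]] by simp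
  then show ?thesis using tower(2) by (simp add: g_def h_def exp_supermartingale_Suc)
qed

lemma integral_exp_supermartingale_le_one:
  assumes "prob_space M" "filtration M F" "bounded_mds_cond_var M F a D v" "0 \<le> l" "l * a \<le> 1"
  shows "(\<integral>x. exp_supermartingale l D v n x \<partial>M) \<le> 1"
proof (induction n)
  case 0
  show ?case using assms(1) by (simp add: exp_supermartingale_def prob_space.prob_space)
next
  case (Suc n)
  then show ?case using integral_exp_supermartingale_Suc_le[OF assms, of n] by linarith
qed

lemma exists_dyadic_scale:
  fixes a q :: real and T :: nat
  assumes "0 < a" "0 \<le> q" "q < T * a"
  shows "\<exists>k<T. q \<le> a * 2 ^ k \<and> a * 2 ^ k \<le> 2 * q + a"
proof -
  have T: "1 \<le> T" using assms by (cases T) auto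
  have "T \<le> 2 ^ (T - 1)" using less_exp[of "T - 1"] T by linarith
  then have "real T \<le> 2 ^ (T - 1)" by (metis of_nat_le_iff of_nat_numeral of_nat_power)
  then have "real T * a \<le> 2 ^ (T - 1) * a" using assms(1) by (intro mult_right_mono) auto
  then have ex: "q \<le> a * 2 ^ (T - 1)" using assms(3) by (simp add: mult.commute)
  define k where "k = (LEAST k. q \<le> a * 2 ^ k)"
  have "q \<le> a * 2 ^ k" unfolding k_def by (rule LeastI[of "\<lambda>k. q \<le> a * 2 ^ k", OF ex])
  moreover have "k < T" using Least_le[of "\<lambda>k. q \<le> a * 2 ^ k", OF ex] T unfolding k_def by linarith
  moreover have "a * 2 ^ k \<le> 2 * q + a"
  proof (cases k)
    case (Suc m)
    then have "a * 2 ^ m < q" using not_less_Least[of m "\<lambda>k. q \<le> a * 2 ^ k"] unfolding k_def by force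
    moreover have "a * 2 ^ k = 2 * (a * 2 ^ m)" using Suc by simp
    ultimately show ?thesis using assms(1) by linarith
  qed (use assms in simp)
  ultimately show ?thesis by blast
qed

lemma abs_le_by_dyadic_peeling:
  fixes s W a l :: real and T :: nat
  assumes a: "0 < a" and W: "0 \<le> W" and l: "0 \<le> l" and s: "\<bar>s\<bar> \<le> T * a"
    and grid: "\<And>k. k < T \<Longrightarrow> \<bar>s\<bar> / (a * 2 ^ k) - W / (a * 2 ^ k)\<^sup>2 \<le> l"
  shows "\<bar>s\<bar> \<le> (sqrt W + a) * (1 + 2 * l)"
proof -
  define q where "q = sqrt W"
  have q: "0 \<le> q" "q * q = W" using W by (simp_all add: q_def)
  show ?thesis
  proof (cases "T * a \<le> q")
    case True
    have "(q + a) * (1 + 2 * l) = q + (a + 2 * l * (q + a))" by (simp add: algebra_simps)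
    moreover have "0 \<le> a + 2 * l * (q + a)" using a l q(1) by simp
    ultimately show ?thesis using s True unfolding q_def by linarith
  next
    case False
    then obtain k where k: "k < T" "q \<le> a * 2 ^ k" "a * 2 ^ k \<le> 2 * q + a"
      using exists_dyadic_scale[OF a q(1), of T] False by force
    define t where "t = a * 2 ^ k"
    have t: "0 < t" using a by (simp add: t_def)
    have "\<bar>s\<bar> - W / t = (\<bar>s\<bar> / t - W / t\<^sup>2) * t" using t by (simp add: field_simps power2_eq_square)
    also have "\<dots> \<le> l * t" using grid[OF k(1)] t unfolding t_def by (intro mult_right_mono) auto
    finally have "\<bar>s\<bar> \<le> W / t + l * t" by simp
    moreover have "W / t \<le> q" using k(2) t q by (simp add: t_def divide_simps mult_left_mono flip: q(2))
    moreover have "l * t \<le> l * (2 * q + a)" using k(3) l by (simp add: t_def mult_left_mono)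
    moreover have "(q + a) * (1 + 2 * l) = q + l * (2 * q + a) + (a + l * a)" by (simp add: algebra_simps)
    moreover have "0 \<le> a + l * a" using a l by simp
    ultimately show ?thesis unfolding q_def by linarith
  qed
qed

lemma add_powr_le_powr_add:
  fixes x y p :: real
  assumes "0 \<le> x" "0 \<le> y" "1 \<le> p"
  shows "x powr p + y powr p \<le> (x + y) powr p"
proof -
  have "x powr p + y powr p = x * x powr (p - 1) + y * y powr (p - 1)"
    using assms by (simp add: powr_mult_base)
  also have "\<dots> \<le> x * (x + y) powr (p - 1) + y * (x + y) powr (p - 1)"
    using assms by (intro add_mono mult_left_mono powr_mono2) auto
  also have "\<dots> = (x + y) powr p"
    using assms by (simp add: powr_mult_base flip: distrib_right)
  finally show ?thesis .
qed

lemma powr_le_split_on_good_event: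
  fixes y w g a c C G0 p :: real
  assumes y: "0 \<le> y" "y \<le> C" and w: "0 \<le> w" and g: "0 \<le> g"
    and a: "0 < a" and c: "0 \<le> c" and G0: "0 < G0" and p: "0 \<le> p"
    and good: "g \<le> G0 \<longrightarrow> y \<le> (sqrt w + a) * c"
  shows "y powr p \<le> (2 * c) powr p * (w powr (p / 2) + a powr p) + C powr p / G0 * g"
proof (cases "g \<le> G0")
  case True
  define u where "u = sqrt w"
  have u: "0 \<le> u" "u powr p = w powr (p / 2)"
    using w by (simp_all add: u_def powr_powr flip: powr_half_sqrt)
  have "y \<le> (u + a) * c" using good True by (simp add: u_def)
  also have "\<dots> \<le> 2 * c * max u a"
    using mult_right_mono[of "u + a" "2 * max u a" c] c by (simp add: mult_ac)
  finally have "y powr p \<le> (2 * c * max u a) powr p" using y p by (intro powr_mono2) auto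
  also have "\<dots> = (2 * c) powr p * max u a powr p" using c u a by (simp add: powr_mult)
  also have "\<dots> \<le> (2 * c) powr p * (w powr (p / 2) + a powr p)"
    using u by (intro mult_left_mono) (auto simp: max_def)
  finally have "y powr p \<le> (2 * c) powr p * (w powr (p / 2) + a powr p)" .
  moreover have "0 \<le> C powr p / G0 * g" using g G0 by simp
  ultimately show ?thesis by linarith
next
  case False
  have "y powr p \<le> C powr p" using y p by (intro powr_mono2) auto
  also have "\<dots> \<le> C powr p * (g / G0)" using False G0 mult_left_mono[of 1 "g / G0" "C powr p"] by simp
  finally have "y powr p \<le> C powr p / G0 * g" by simp
  moreover have "0 \<le> (2 * c) powr p * (w powr (p / 2) + a powr p)" by simp
  ultimately show ?thesis by linarith
qed

lemma moment_bound_of_good_event: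
  fixes Y W G :: "'a \<Rightarrow> real"
  assumes "prob_space M" and meas: "Y \<in> borel_measurable M" "W \<in> borel_measurable M"
    and a: "0 < a" and p: "1 \<le> p" and c: "0 \<le> c" and G0: "0 < G0"
    and Y: "AE x in M. 0 \<le> Y x \<and> Y x \<le> C" and W: "AE x in M. 0 \<le> W x \<and> W x \<le> Wmax"
    and G: "integrable M G" "AE x in M. 0 \<le> G x" "C powr p * (\<integral>x. G x \<partial>M) \<le> a powr p * G0"
    and good: "AE x in M. G x \<le> G0 \<longrightarrow> Y x \<le> (sqrt (W x) + a) * c"
  shows "(\<integral>x. Y x powr p \<partial>M) powr (1 / p)
    \<le> (2 * c + 1) * ((\<integral>x. W x powr (p / 2) \<partial>M) powr (1 / p) + a)"
proof -
  interpret prob_space M by fact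
  have "AE x in M. norm (Y x powr p) \<le> C powr p"
    using Y by eventually_elim (use p in \<open>auto intro: powr_mono2\<close>)
  then have Y_int: "integrable M (\<lambda>x. Y x powr p)"
    using meas(1) by (intro integrable_const_bound) auto
  have "AE x in M. norm (W x powr (p / 2)) \<le> Wmax powr (p / 2)"
    using W by eventually_elim (use p in \<open>auto intro: powr_mono2\<close>)
  then have W_int: "integrable M (\<lambda>x. W x powr (p / 2))"
    using meas(2) by (intro integrable_const_bound) auto
  define IW where "IW = (\<integral>x. W x powr (p / 2) \<partial>M)"
  define w where "w = IW powr (1 / p)"
  have IW: "0 \<le> IW" "w powr p = IW" using p by (simp_all add: IW_def w_def powr_powr)
  have "AE x in M. Y x powr p \<le> (2 * c) powr p * (W x powr (p / 2) + a powr p) + C powr p / G0 * G x"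
    using Y W G(2) good
    by eventually_elim (rule powr_le_split_on_good_event, use a c G0 p in auto)
  then have "(\<integral>x. Y x powr p \<partial>M)
      \<le> (\<integral>x. (2 * c) powr p * (W x powr (p / 2) + a powr p) + C powr p / G0 * G x \<partial>M)"
    using Y_int W_int G(1) by (intro integral_mono_AE) auto
  also have "\<dots> = (2 * c) powr p * (IW + a powr p) + C powr p / G0 * (\<integral>x. G x \<partial>M)"
    using W_int G(1) by (simp add: IW_def prob_space)
  also have "\<dots> \<le> (2 * c) powr p * (IW + a powr p) + a powr p"
    using G(3) G0 by (simp add: field_simps)
  also have "\<dots> \<le> ((2 * c) powr p + 1) * (IW + a powr p)"
    using IW by (simp add: algebra_simps)
  also have "\<dots> \<le> (2 * c + 1) powr p * (w + a) powr p"
    using add_powr_le_powr_add[of "2 * c" 1 p] add_powr_le_powr_add[of w a p] IW a c p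
    by (intro mult_mono) (simp_all add: w_def)
  also have "\<dots> = ((2 * c + 1) * (w + a)) powr p" using a c by (simp add: w_def powr_mult)
  finally have "(\<integral>x. Y x powr p \<partial>M) powr (1 / p) \<le> (((2 * c + 1) * (w + a)) powr p) powr (1 / p)"
    using p by (intro powr_mono2) (auto intro: integral_nonneg_AE)
  also have "\<dots> = (2 * c + 1) * (w + a)" using a c p by (simp add: w_def powr_powr)
  finally show ?thesis by (simp add: w_def IW_def)
qed

lemma ln_two_ge_three_eighths: "3 / 8 \<le> ln (2 :: real)"
proof -
  have "exp (3 / 8) \<le> 1 + 3 / 8 + (3 / 8 :: real)\<^sup>2" by (rule exp_bound) auto
  also have "\<dots> \<le> 2" by (simp add: power2_eq_square)
  finally show ?thesis by (subst ln_ge_iff) auto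
qed

lemma three_plus_four_ln_le:
  fixes p d T :: real
  assumes p: "2 \<le> p" and d: "1 \<le> d" and T: "2 \<le> T"
  shows "3 + 4 * ln (2 * d * T * T powr p) \<le> 4 * p * ln (2 * d * T\<^sup>2)"
proof -
  have ln2: "3 / 8 \<le> ln (2 :: real)" by (rule ln_two_ge_three_eighths)
  have lnT: "ln 2 \<le> ln T" using T by simp
  have "2 * ln 2 \<le> p * ln 2" using mult_right_mono[of 2 p "ln 2"] p by simp
  moreover have "ln d \<le> p * ln d" using mult_right_mono[of 1 p "ln d"] p d by simp
  moreover have "2 * ln T \<le> p * ln T" using mult_right_mono[of 2 p "ln T"] p T by simp
  moreover have "3 + 4 * ln (2 * d * T * T powr p) = 3 + 4 * ln 2 + 4 * ln d + 4 * ln T + 4 * (p * ln T)"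
    using d T by (simp add: ln_mult_pos ln_powr)
  moreover have "4 * p * ln (2 * d * T\<^sup>2) = 4 * (p * ln 2) + 4 * (p * ln d) + 8 * (p * ln T)"
    using d T by (simp add: ln_mult_pos ln_realpow algebra_simps)
  ultimately show ?thesis using ln2 lnT by linarith
qed

lemma abs_nth_le_vnorm_inf: "\<bar>v $ i\<bar> \<le> vnorm_inf v"
  unfolding vnorm_inf_def by (rule Max_ge) auto

lemma vnorm_inf_nonneg: "0 \<le> vnorm_inf v"
  using abs_nth_le_vnorm_inf[of v undefined] by linarith

lemma vnorm_inf_le_iff: "vnorm_inf v \<le> c \<longleftrightarrow> (\<forall>i. \<bar>v $ i\<bar> \<le> c)"
  unfolding vnorm_inf_def by (subst Max_le_iff) auto

lemma borel_measurable_vnorm_inf: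
  assumes "\<And>i. (\<lambda>x. f x $ i) \<in> borel_measurable M"
  shows "(\<lambda>x. vnorm_inf (f x)) \<in> borel_measurable M"
  unfolding vnorm_inf_def using assms by (intro borel_measurable_Max) auto

definition dyadic_exp_sum :: "real \<Rightarrow> nat \<Rightarrow> real ^ 'd \<Rightarrow> real ^ 'd \<Rightarrow> real" where
  "dyadic_exp_sum a T s w =
    (\<Sum>k<T. \<Sum>i\<in>UNIV. \<Sum>\<sigma>\<in>{-1, 1}. exp (\<sigma> * s $ i / (a * 2 ^ k) - w $ i / (a * 2 ^ k)\<^sup>2))"

lemma dyadic_exp_sum_nonneg: "0 \<le> dyadic_exp_sum a T s w"
  unfolding dyadic_exp_sum_def by (intro sum_nonneg) auto

lemma exp_le_dyadic_exp_sum: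
  assumes "k < T" "\<sigma> \<in> {-1, 1}"
  shows "exp (\<sigma> * s $ i / (a * 2 ^ k) - w $ i / (a * 2 ^ k)\<^sup>2) \<le> dyadic_exp_sum a T s w"
proof -
  let ?e = "\<lambda>k i \<sigma>. exp (\<sigma> * s $ i / (a * 2 ^ k) - w $ i / (a * 2 ^ k)\<^sup>2)"
  have "?e k i \<sigma> \<le> (\<Sum>\<sigma>\<in>{-1, 1}. ?e k i \<sigma>)"
    using assms(2) by (intro member_le_sum) auto
  also have "\<dots> \<le> (\<Sum>i\<in>UNIV. \<Sum>\<sigma>\<in>{-1, 1}. ?e k i \<sigma>)"
    by (intro member_le_sum sum_nonneg) auto
  also have "\<dots> \<le> dyadic_exp_sum a T s w"
    unfolding dyadic_exp_sum_def using assms(1) by (intro member_le_sum sum_nonneg) auto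
  finally show ?thesis .
qed

lemma vnorm_inf_le_of_dyadic_exp_sum_le:
  fixes s w :: "real ^ 'd" and a G0 :: real and T :: nat
  assumes a: "0 < a" and w: "\<And>i. 0 \<le> w $ i" and s: "\<And>i. \<bar>s $ i\<bar> \<le> T * a"
    and G: "dyadic_exp_sum a T s w \<le> G0" "1 \<le> G0"
  shows "vnorm_inf s \<le> (sqrt (vnorm_inf w) + a) * (1 + 2 * ln G0)"
  unfolding vnorm_inf_le_iff
proof
  fix i
  show "\<bar>s $ i\<bar> \<le> (sqrt (vnorm_inf w) + a) * (1 + 2 * ln G0)"
  proof (rule abs_le_by_dyadic_peeling[OF a vnorm_inf_nonneg _ s])
    fix k assume k: "k < T"
    define t where "t = a * 2 ^ k"
    define \<sigma> where "\<sigma> = (if 0 \<le> s $ i then 1 else -1 :: real)"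
    have \<sigma>: "\<sigma> \<in> {-1, 1}" "\<sigma> * s $ i = \<bar>s $ i\<bar>" by (auto simp: \<sigma>_def)
    have "w $ i \<le> vnorm_inf w" using abs_nth_le_vnorm_inf[of w i] w[of i] by simp
    then have "\<bar>s $ i\<bar> / t - vnorm_inf w / t\<^sup>2 \<le> \<sigma> * s $ i / t - w $ i / t\<^sup>2"
      using \<sigma>(2) a by (simp add: t_def divide_right_mono)
    also have "\<dots> \<le> ln G0"
      using exp_le_dyadic_exp_sum[OF k \<sigma>(1), of s i a w] G
      by (subst ln_ge_iff) (auto simp: t_def)
    finally show "\<bar>s $ i\<bar> / (a * 2 ^ k) - vnorm_inf w / (a * 2 ^ k)\<^sup>2 \<le> ln G0"
      unfolding t_def .
  qed (use G in simp)
qed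

lemma integral_dyadic_exp_sum_le:
  fixes D v :: "nat \<Rightarrow> 'a \<Rightarrow> real ^ 'd" and a :: real and T :: nat
  assumes P: "prob_space M" and filt: "filtration M F"
    and mds: "\<And>i. bounded_mds_cond_var M F a (\<lambda>j x. D j x $ i) (\<lambda>j x. v j x $ i)" and a: "0 < a"
  shows "integrable M (\<lambda>x. dyadic_exp_sum a T (\<Sum>j=1..T. D j x) (\<Sum>j=1..T. v j x))"
    and "(\<integral>x. dyadic_exp_sum a T (\<Sum>j=1..T. D j x) (\<Sum>j=1..T. v j x) \<partial>M) \<le> 2 * CARD('d) * T"
proof -
  interpret prob_space M by fact
  define E where "E k i \<sigma> x = exp (\<sigma> * (\<Sum>j=1..T. D j x) $ i / (a * 2 ^ k)
    - (\<Sum>j=1..T. v j x) $ i / (a * 2 ^ k)\<^sup>2)" for k i and \<sigma> :: real and x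
  have E: "integrable M (E k i \<sigma>)" "(\<integral>x. E k i \<sigma> x \<partial>M) \<le> 1" if \<sigma>: "\<sigma> \<in> {-1, 1}" for k i \<sigma>
  proof -
    define l :: real where "l = 1 / (a * 2 ^ k)"
    have l: "0 \<le> l" "l * a \<le> 1" using a by (simp_all add: l_def)
    have E_eq: "E k i \<sigma> = exp_supermartingale l (\<lambda>j x. \<sigma> * D j x $ i) (\<lambda>j x. v j x $ i) T"
      by (simp add: E_def l_def exp_supermartingale_def fun_eq_iff flip: sum_distrib_left)
        (simp add: field_simps power2_eq_square)
    have "bounded_mds_cond_var M F a (\<lambda>j x. \<sigma> * D j x $ i) (\<lambda>j x. v j x $ i)"
      using \<sigma> by (intro bounded_mds_cond_var_sign[OF P filt mds]) auto
    then show "integrable M (E k i \<sigma>)" "(\<integral>x. E k i \<sigma> x \<partial>M) \<le> 1"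
      unfolding E_eq using integrable_exp_supermartingale[OF P filt _ l(1)]
        integral_exp_supermartingale_le_one[OF P filt _ l] by simp_all
  qed
  have G_eq: "dyadic_exp_sum a T (\<Sum>j=1..T. D j x) (\<Sum>j=1..T. v j x)
      = (\<Sum>k<T. \<Sum>i\<in>UNIV. \<Sum>\<sigma>\<in>{-1, 1}. E k i \<sigma> x)" for x
    unfolding dyadic_exp_sum_def E_def ..
  show "integrable M (\<lambda>x. dyadic_exp_sum a T (\<Sum>j=1..T. D j x) (\<Sum>j=1..T. v j x))"
    unfolding G_eq using E(1) by (intro Bochner_Integration.integrable_sum) auto
  have "(\<integral>x. dyadic_exp_sum a T (\<Sum>j=1..T. D j x) (\<Sum>j=1..T. v j x) \<partial>M)
      = (\<Sum>k<T. \<Sum>i\<in>UNIV. \<Sum>\<sigma>\<in>{-1, 1}. \<integral>x. E k i \<sigma> x \<partial>M)"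
    unfolding G_eq using E(1) by (simp add: Bochner_Integration.integral_sum)
  also have "\<dots> \<le> (\<Sum>k<T. \<Sum>i\<in>(UNIV :: 'd set). \<Sum>\<sigma>\<in>{-1, 1 :: real}. 1)"
    using E(2) by (intro sum_mono) auto
  finally show "(\<integral>x. dyadic_exp_sum a T (\<Sum>j=1..T. D j x) (\<Sum>j=1..T. v j x) \<partial>M) \<le> 2 * CARD('d) * T"
    by (simp add: mult_ac)
qed

lemma AE_bounded_mds_sum_bounds:
  fixes D v :: "nat \<Rightarrow> 'a \<Rightarrow> real ^ 'd" and a :: real and T :: nat
  assumes P: "prob_space M" and filt: "filtration M F"
    and mds: "\<And>i. bounded_mds_cond_var M F a (\<lambda>j x. D j x $ i) (\<lambda>j x. v j x $ i)"
  shows "AE x in M. \<forall>i. \<bar>(\<Sum>j=1..T. D j x) $ i\<bar> \<le> T * a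
    \<and> 0 \<le> (\<Sum>j=1..T. v j x) $ i \<and> (\<Sum>j=1..T. v j x) $ i \<le> T * a\<^sup>2"
proof -
  have "AE x in M. \<forall>i\<in>UNIV. \<forall>j\<in>{1..T}. \<bar>D j x $ i\<bar> \<le> a \<and> 0 \<le> v j x $ i \<and> v j x $ i \<le> a\<^sup>2"
    using bounded_mds_cond_varD(2)[OF mds] bounded_mds_cond_var_bounds[OF P filt mds]
    by (intro AE_finite_allI AE_conjI) auto
  then show ?thesis
  proof eventually_elim
    case (elim x)
    show ?case
    proof
      fix i
      have "\<bar>\<Sum>j=1..T. D j x $ i\<bar> \<le> (\<Sum>j=1..T. a)"
        using elim by (intro order_trans[OF sum_abs sum_mono]) auto
      moreover have "0 \<le> (\<Sum>j=1..T. v j x $ i)" using elim by (intro sum_nonneg) auto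
      moreover have "(\<Sum>j=1..T. v j x $ i) \<le> (\<Sum>j=1..T. a\<^sup>2)" using elim by (intro sum_mono) auto
      ultimately show "\<bar>(\<Sum>j=1..T. D j x) $ i\<bar> \<le> T * a
        \<and> 0 \<le> (\<Sum>j=1..T. v j x) $ i \<and> (\<Sum>j=1..T. v j x) $ i \<le> T * a\<^sup>2"
        by simp
    qed
  qed
qed

lemma moment_vnorm_inf_sum_bounded_mds_le_pos:
  fixes D v :: "nat \<Rightarrow> 'a \<Rightarrow> real ^ 'd" and a p :: real and T :: nat
  assumes P: "prob_space M" and filt: "filtration M F"
    and mds: "\<And>i. bounded_mds_cond_var M F a (\<lambda>j x. D j x $ i) (\<lambda>j x. v j x $ i)"
    and a: "0 < a" and T: "1 \<le> T" and p: "1 \<le> p"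
  shows "(\<integral>x. vnorm_inf (\<Sum>j=1..T. D j x) powr p \<partial>M) powr (1 / p)
    \<le> (3 + 4 * ln (2 * CARD('d) * T * T powr p)) *
       ((\<integral>x. vnorm_inf (\<Sum>j=1..T. v j x) powr (p / 2) \<partial>M) powr (1 / p) + a)"
proof -
  interpret prob_space M by fact
  define S where "S x = (\<Sum>j=1..T. D j x)" for x
  define A where "A x = (\<Sum>j=1..T. v j x)" for x
  define G where "G x = dyadic_exp_sum a T (S x) (A x)" for x
  define N where "N = 2 * real CARD('d) * T"
  define G0 where "G0 = N * T powr p"
  have "1 \<le> 2 * real CARD('d)" using zero_less_card_finite[where 'a = 'd] by linarith
  then have "1 * 1 \<le> (2 * real CARD('d)) * T" using T by (intro mult_mono) auto
  then have "1 * 1 \<le> N * T powr p"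
    using T p by (intro mult_mono ge_one_powr_ge_zero) (auto simp: N_def)
  then have G0: "1 \<le> G0" by (simp add: G0_def)
  have bounds: "AE x in M. \<forall>i. \<bar>S x $ i\<bar> \<le> T * a \<and> 0 \<le> A x $ i \<and> A x $ i \<le> T * a\<^sup>2"
    using AE_bounded_mds_sum_bounds[OF P filt mds, of T] by (simp add: S_def A_def)
  then have S_bound: "AE x in M. 0 \<le> vnorm_inf (S x) \<and> vnorm_inf (S x) \<le> T * a"
    and A_bound: "AE x in M. 0 \<le> vnorm_inf (A x) \<and> vnorm_inf (A x) \<le> T * a\<^sup>2"
    by (eventually_elim, simp add: vnorm_inf_nonneg vnorm_inf_le_iff)+
  have G: "integrable M G" "(\<integral>x. G x \<partial>M) \<le> N"
    using integral_dyadic_exp_sum_le[OF P filt mds a, of T] by (simp_all add: G_def[abs_def] S_def A_def N_def)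
  have "(T * a) powr p * (\<integral>x. G x \<partial>M) \<le> (T * a) powr p * N"
    using G(2) by (rule mult_left_mono) simp
  also have "\<dots> = a powr p * G0" using a by (simp add: G0_def powr_mult)
  finally have G_le: "(T * a) powr p * (\<integral>x. G x \<partial>M) \<le> a powr p * G0" .
  have good: "AE x in M. G x \<le> G0 \<longrightarrow> vnorm_inf (S x) \<le> (sqrt (vnorm_inf (A x)) + a) * (1 + 2 * ln G0)"
    using bounds unfolding G_def
    by eventually_elim (auto intro: vnorm_inf_le_of_dyadic_exp_sum_le[OF a _ _ _ G0])
  have "(\<lambda>x. D j x $ i) \<in> borel_measurable M" "(\<lambda>x. v j x $ i) \<in> borel_measurable M"
    if "1 \<le> j" for i j
    using bounded_mds_cond_varD(1,4)[OF mds that] by (auto intro: measurable_filtration[OF filt])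
  then have meas: "(\<lambda>x. vnorm_inf (S x)) \<in> borel_measurable M" "(\<lambda>x. vnorm_inf (A x)) \<in> borel_measurable M"
    unfolding S_def A_def by (auto intro!: borel_measurable_vnorm_inf borel_measurable_sum)
  have "(\<integral>x. vnorm_inf (S x) powr p \<partial>M) powr (1 / p)
      \<le> (2 * (1 + 2 * ln G0) + 1) * ((\<integral>x. vnorm_inf (A x) powr (p / 2) \<partial>M) powr (1 / p) + a)"
    by (rule moment_bound_of_good_event[OF P meas a p _ _ S_bound A_bound G(1) _ G_le good])
      (use G0 in \<open>simp_all add: G_def dyadic_exp_sum_nonneg\<close>)
  moreover have "2 * (1 + 2 * ln G0) + 1 = 3 + 4 * ln G0" by simp
  ultimately show ?thesis unfolding S_def A_def G0_def N_def by simp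
qed

theorem moment_vnorm_inf_sum_bounded_mds_le:
  fixes D v :: "nat \<Rightarrow> 'a \<Rightarrow> real ^ 'd" and a p :: real and T :: nat
  assumes P: "prob_space M" and filt: "filtration M F"
    and mds: "\<And>i. bounded_mds_cond_var M F a (\<lambda>j x. D j x $ i) (\<lambda>j x. v j x $ i)"
    and a: "0 \<le> a" and T: "2 \<le> T" and p: "2 \<le> p"
  shows "(\<integral>x. vnorm_inf (\<Sum>j=1..T. D j x) powr p \<partial>M) powr (1 / p)
    \<le> 4 * p * ln (2 * CARD('d) * T\<^sup>2) *
       ((\<integral>x. vnorm_inf (\<Sum>j=1..T. v j x) powr (p / 2) \<partial>M) powr (1 / p) + a)"
proof -
  define R where "R = (\<integral>x. vnorm_inf (\<Sum>j=1..T. v j x) powr (p / 2) \<partial>M) powr (1 / p) + a"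
  have R: "0 \<le> R" using a by (simp add: R_def)
  have d: "1 \<le> real CARD('d)" "1 \<le> 2 * real CARD('d)"
    using zero_less_card_finite[where 'a = 'd] by linarith+
  show ?thesis
  proof (cases "a = 0")
    case True
    have "AE x in M. vnorm_inf (\<Sum>j=1..T. D j x) powr p = 0"
      using AE_bounded_mds_sum_bounds[OF P filt mds, of T]
      by eventually_elim (simp add: True vnorm_inf_le_iff order_antisym vnorm_inf_nonneg)
    then have "(\<integral>x. vnorm_inf (\<Sum>j=1..T. D j x) powr p \<partial>M) = 0" by (rule integral_eq_zero_AE)
    moreover have "1 * 1 \<le> (2 * real CARD('d)) * T\<^sup>2" using d(2) T by (intro mult_mono one_le_power) auto
    then have "0 \<le> 4 * p * ln (2 * CARD('d) * T\<^sup>2) * R" using p R by simp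
    ultimately show ?thesis by (simp add: R_def)
  next
    case False
    have "(\<integral>x. vnorm_inf (\<Sum>j=1..T. D j x) powr p \<partial>M) powr (1 / p)
        \<le> (3 + 4 * ln (2 * CARD('d) * T * T powr p)) * R"
      unfolding R_def using a False T p
      by (intro moment_vnorm_inf_sum_bounded_mds_le_pos[OF P filt mds]) auto
    also have "\<dots> \<le> 4 * p * ln (2 * CARD('d) * T\<^sup>2) * R"
      using three_plus_four_ln_le[OF p d(1), of T] T R by (intro mult_right_mono) auto
    finally show ?thesis by (simp add: R_def)
  qed
qed

lemma row_abs_sum_le_mnorm_inf: "(\<Sum>k\<in>UNIV. \<bar>A $ i $ k\<bar>) \<le> mnorm_inf A"
  unfolding mnorm_inf_def by (rule Max_ge) auto

lemma mnorm_inf_nonneg: "0 \<le> mnorm_inf A"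
proof -
  have "0 \<le> (\<Sum>k\<in>UNIV. \<bar>A $ undefined $ k\<bar>)" by (simp add: sum_nonneg)
  then show ?thesis using row_abs_sum_le_mnorm_inf[of A undefined] by linarith
qed

lemma mnorm_inf_diag_part: "mnorm_inf (diag_part A) = vnorm_inf (\<chi> i. A $ i $ i)"
proof -
  have "(\<Sum>k\<in>UNIV. \<bar>diag_part A $ i $ k\<bar>) = \<bar>A $ i $ i\<bar>" for i
    unfolding diag_part_def by (simp add: if_distrib[of abs] cong: if_cong)
  then show ?thesis unfolding mnorm_inf_def vnorm_inf_def by simp
qed

lemma abs_inner_le_vnorm_inf:
  fixes w v :: "real ^ 'd"
  shows "\<bar>inner w v\<bar> \<le> (\<Sum>k\<in>UNIV. \<bar>w $ k\<bar>) * vnorm_inf v"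
proof -
  have "\<bar>inner w v\<bar> \<le> (\<Sum>k\<in>UNIV. \<bar>w $ k\<bar> * \<bar>v $ k\<bar>)"
    unfolding inner_vec_def by (rule order_trans[OF sum_abs]) (simp add: abs_mult)
  also have "\<dots> \<le> (\<Sum>k\<in>UNIV. \<bar>w $ k\<bar> * vnorm_inf v)"
    by (intro sum_mono mult_left_mono abs_nth_le_vnorm_inf) auto
  finally show ?thesis by (simp add: sum_distrib_right)
qed

lemma diag_matrix_mult_transpose:
  fixes B C :: "real ^ 'd ^ 'd"
  shows "(B ** C ** transpose B) $ i $ i = (\<Sum>k\<in>UNIV. \<Sum>l\<in>UNIV. B $ i $ k * B $ i $ l * C $ k $ l)"
  unfolding matrix_matrix_mult_def transpose_def
  by (simp add: sum_distrib_left sum_distrib_right mult_ac) (subst sum.swap, simp add: mult_ac)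

lemma mds_inner:
  assumes P: "prob_space M" and filt: "filtration M F" and mds: "mds M F X" and j: "1 \<le> j"
  shows "(\<lambda>x. inner w (X j x)) \<in> borel_measurable (F j)"
    and "AE x in M. real_cond_exp M (F (j - 1)) (\<lambda>x. inner w (X j x)) x = 0"
proof -
  interpret S: sigma_finite_subalgebra M "F (j - 1)"
    using sigma_finite_subalgebra_filtration P filt .
  have X: "X j \<in> borel_measurable (F j)" "integrable M (X j)"
    "\<And>k. AE x in M. real_cond_exp M (F (j - 1)) (\<lambda>y. X j y $ k) x = 0"
    using mds j unfolding mds_def by auto
  have X_int: "integrable M (\<lambda>x. X j x $ k)" for k
    using integrable_bounded_linear[OF bounded_linear_vec_nth X(2)] .
  have inner_eq: "(\<lambda>x. inner w (X j x)) = (\<lambda>x. \<Sum>k\<in>UNIV. w $ k * X j x $ k)"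
    by (simp add: inner_vec_def)
  show "(\<lambda>x. inner w (X j x)) \<in> borel_measurable (F j)"
    using measurable_compose[OF X(1) borel_measurable_nth] unfolding inner_eq by measurable
  have "AE x in M. \<forall>k\<in>UNIV. real_cond_exp M (F (j - 1)) (\<lambda>x. w $ k * X j x $ k) x = 0"
  proof (intro AE_finite_allI)
    fix k
    show "AE x in M. real_cond_exp M (F (j - 1)) (\<lambda>x. w $ k * X j x $ k) x = 0"
      using S.real_cond_exp_cmult[OF X_int, of "w $ k" k] X(3)[of k] by eventually_elim simp
  qed simp
  moreover have "AE x in M. real_cond_exp M (F (j - 1)) (\<lambda>x. \<Sum>k\<in>UNIV. w $ k * X j x $ k) x
      = (\<Sum>k\<in>UNIV. real_cond_exp M (F (j - 1)) (\<lambda>x. w $ k * X j x $ k) x)"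
    using X_int by (intro S.real_cond_exp_sum) auto
  ultimately show "AE x in M. real_cond_exp M (F (j - 1)) (\<lambda>x. inner w (X j x)) x = 0"
    unfolding inner_eq by eventually_elim simp
qed

lemma real_cond_exp_inner_square:
  assumes P: "prob_space M" and filt: "filtration M F"
    and int: "\<And>k l. integrable M (\<lambda>y. X j y $ k * X j y $ l)"
  shows "AE x in M. real_cond_exp M (F (j - 1)) (\<lambda>y. (inner w (X j y))\<^sup>2) x
    = (\<Sum>k\<in>UNIV. \<Sum>l\<in>UNIV. w $ k * w $ l * cond_cov M F X j x $ k $ l)"
proof -
  interpret S: sigma_finite_subalgebra M "F (j - 1)"
    using sigma_finite_subalgebra_filtration P filt .
  have sq: "(\<lambda>y. (inner w (X j y))\<^sup>2)
      = (\<lambda>y. \<Sum>k\<in>UNIV. \<Sum>l\<in>UNIV. w $ k * w $ l * (X j y $ k * X j y $ l))"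
    by (simp add: inner_vec_def power2_eq_square sum_product mult_ac)
  have "AE x in M. real_cond_exp M (F (j - 1))
      (\<lambda>y. \<Sum>k\<in>UNIV. \<Sum>l\<in>UNIV. w $ k * w $ l * (X j y $ k * X j y $ l)) x
      = (\<Sum>k\<in>UNIV. real_cond_exp M (F (j - 1)) (\<lambda>y. \<Sum>l\<in>UNIV. w $ k * w $ l * (X j y $ k * X j y $ l)) x)"
    using int by (intro S.real_cond_exp_sum) auto
  moreover have "AE x in M. \<forall>k\<in>UNIV. real_cond_exp M (F (j - 1))
      (\<lambda>y. \<Sum>l\<in>UNIV. w $ k * w $ l * (X j y $ k * X j y $ l)) x
      = (\<Sum>l\<in>UNIV. real_cond_exp M (F (j - 1)) (\<lambda>y. w $ k * w $ l * (X j y $ k * X j y $ l)) x)"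
    using int by (intro AE_finite_allI S.real_cond_exp_sum) auto
  moreover have "AE x in M. \<forall>k\<in>UNIV. \<forall>l\<in>UNIV.
      real_cond_exp M (F (j - 1)) (\<lambda>y. w $ k * w $ l * (X j y $ k * X j y $ l)) x
      = w $ k * w $ l * real_cond_exp M (F (j - 1)) (\<lambda>y. X j y $ k * X j y $ l) x"
    using int by (intro AE_finite_allI S.real_cond_exp_cmult) auto
  ultimately show ?thesis unfolding sq by eventually_elim (simp add: cond_cov_def)
qed

lemma bounded_mds_cond_var_matrix_row:
  fixes X :: "nat \<Rightarrow> 'a \<Rightarrow> real ^ 'd" and Bm :: "nat \<Rightarrow> real ^ 'd ^ 'd"
  assumes P: "prob_space M" and filt: "filtration M F" and mds: "mds M F X"
    and int: "\<And>j k l. 1 \<le> j \<Longrightarrow> integrable M (\<lambda>y. X j y $ k * X j y $ l)"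
    and X: "AE x in M. \<forall>j\<ge>1. vnorm_inf (X j x) \<le> \<kappa>"
    and B: "\<And>j. 1 \<le> j \<Longrightarrow> mnorm_inf (Bm j) \<le> B"
  shows "bounded_mds_cond_var M F (B * \<kappa>) (\<lambda>j x. (Bm j *v X j x) $ i)
    (\<lambda>j x. (Bm j ** cond_cov M F X j x ** transpose (Bm j)) $ i $ i)"
  unfolding matrix_vector_mul_component diag_matrix_mult_transpose
proof (rule bounded_mds_cond_varI)
  fix j :: nat assume j: "1 \<le> j"
  show "(\<lambda>x. inner (Bm j $ i) (X j x)) \<in> borel_measurable (F j)"
    and "AE x in M. real_cond_exp M (F (j - 1)) (\<lambda>x. inner (Bm j $ i) (X j x)) x = 0"
    using mds_inner[OF P filt mds j] by blast+
  have "0 \<le> B" using B[OF j] mnorm_inf_nonneg[of "Bm j"] by linarith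
  show "AE x in M. \<bar>inner (Bm j $ i) (X j x)\<bar> \<le> B * \<kappa>"
    using X
  proof eventually_elim
    case (elim x)
    have "(\<Sum>k\<in>UNIV. \<bar>Bm j $ i $ k\<bar>) * vnorm_inf (X j x) \<le> B * \<kappa>"
      using elim j row_abs_sum_le_mnorm_inf[of "Bm j" i] B[OF j] \<open>0 \<le> B\<close>
      by (intro mult_mono) (auto simp: vnorm_inf_nonneg)
    then show ?case using abs_inner_le_vnorm_inf order_trans by blast
  qed
  show "(\<lambda>x. \<Sum>k\<in>UNIV. \<Sum>l\<in>UNIV. Bm j $ i $ k * Bm j $ i $ l * cond_cov M F X j x $ k $ l)
      \<in> borel_measurable (F (j - 1))"
    unfolding cond_cov_def vec_lambda_beta
    by (intro borel_measurable_sum borel_measurable_times borel_measurable_const borel_measurable_cond_exp)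
  show "AE x in M. (\<Sum>k\<in>UNIV. \<Sum>l\<in>UNIV. Bm j $ i $ k * Bm j $ i $ l * cond_cov M F X j x $ k $ l)
      = real_cond_exp M (F (j - 1)) (\<lambda>y. (inner (Bm j $ i) (X j y))\<^sup>2) x"
    using real_cond_exp_inner_square[where X = X and j = j and w = "Bm j $ i", OF P filt int[OF j]] by eventually_elim simp
qed

theorem lemmaD8:
  fixes M :: "'a measure" and F :: "nat \<Rightarrow> 'a measure"
    and X :: "nat \<Rightarrow> 'a \<Rightarrow> real ^ 'd" and Bm :: "nat \<Rightarrow> real ^ 'd ^ 'd"
    and T :: nat and p \<kappa> B :: real
  assumes "prob_space M"
    and "filtration M F"
    and "mds M F X"
    and "\<And>j i k. j \<ge> 1 \<Longrightarrow> integrable M (\<lambda>y. X j y $ i * X j y $ k)"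
    and "\<kappa> > 0"
    and "AE x in M. \<forall>j\<ge>1. vnorm_inf (X j x) \<le> \<kappa>"
    and "\<And>j. j \<ge> 1 \<Longrightarrow> mnorm_inf (Bm j) \<le> B"
    and "T \<ge> 2" and "p \<ge> 2"
  shows "(\<integral>x. vnorm_inf (\<Sum>j=1..T. Bm j *v X j x) powr p \<partial>M) powr (1 / p)
     \<le> 4 * p * ln (2 * real CARD('d) * real T ^ 2) *
        ((\<integral>x. mnorm_inf (diag_part (\<Sum>j=1..T. Bm j ** cond_cov M F X j x ** transpose (Bm j)))
              powr (p / 2) \<partial>M) powr (1 / p) + B * \<kappa>)"
proof -
  define V where "V j x = (\<chi> i. (Bm j ** cond_cov M F X j x ** transpose (Bm j)) $ i $ i)" for j x
  have "0 \<le> B" using assms(7)[of 1] mnorm_inf_nonneg[of "Bm 1"] by simp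
  then have "0 \<le> B * \<kappa>" using assms(5) by simp
  moreover have "bounded_mds_cond_var M F (B * \<kappa>) (\<lambda>j x. (Bm j *v X j x) $ i) (\<lambda>j x. V j x $ i)" for i
    unfolding V_def using bounded_mds_cond_var_matrix_row[OF assms(1-4,6-7)] by simp
  ultimately have "(\<integral>x. vnorm_inf (\<Sum>j=1..T. Bm j *v X j x) powr p \<partial>M) powr (1 / p)
     \<le> 4 * p * ln (2 * CARD('d) * T\<^sup>2) *
       ((\<integral>x. vnorm_inf (\<Sum>j=1..T. V j x) powr (p / 2) \<partial>M) powr (1 / p) + B * \<kappa>)"
    by (intro moment_vnorm_inf_sum_bounded_mds_le[OF assms(1,2) _ _ assms(8,9)])
  moreover have "(\<Sum>j=1..T. V j x)
      = (\<chi> i. (\<Sum>j=1..T. Bm j ** cond_cov M F X j x ** transpose (Bm j)) $ i $ i)" for x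
    by (simp add: V_def vec_eq_iff)
  ultimately show ?thesis by (simp add: mnorm_inf_diag_part)
qed

end
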